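(* Let $K$ be a totally ordered quasi-field of characteristic $1$ and let $x\in K$. (a) The set of polynomials $P\in K[X]$ admitting $x$ as a root is the ideal $J$ of $K[X]$ generated by the polynomials $X^k+x^k$, $k\ge 1$. (b) The set of rational polynomials in $K\{X\}$ admitting $x$ as a root is the ideal of $K\{X\}$ generated by (the image of) $X+x$.
   Context: A quasi-field of characteristic $1$ is a commutative semiring $K$ with $1+1=1$ in which every nonzero element is multiplicatively invertible; it is ordered by $a\le b$ iff $a+b=b$, and totally ordered means this order is total (so $a+b=\max(a,b)$). A point $x\in K$ is a root of $P\in K[X]$ if one can write $P=P_1+P_2$ with $P_1,P_2$ having disjoint sets of monomials and $P_1(x)=P_2(x)$ (equivalently, $P(x)=0$ or the maximal value of the monomials of $P$ at $x$ is attained by at least two distinct monomials). The semiring $K[X]$ has no zero divisors but is not cancellative; $K\{X\}$ denotes its image in its quasi-field of fractions, i.e. the quotient of $K[X]$ by the relation $P\sim Q$ iff $RP=RQ$ for some nonzero $R$; its elements are called rational polynomials, and a rational polynomial has $x$ as root if one (equivalently every) representative does. An ideal generated by a set $S$ consists of finite sums of multiples of elements of $S$. *)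

theory Defs
  imports "HOL-Computational_Algebra.Polynomial"
begin

class qf_char1 = comm_semiring_1 +
  assumes one_add_one_qf: "1 + 1 = 1"
  assumes nonzero_invertible: "a \<noteq> 0 \<Longrightarrow> \<exists>b. a * b = 1"
begin

subclass semiring_no_zero_divisors
proof
  fix a b :: 'a assume a: "a \<noteq> 0" and b: "b \<noteq> 0"
  show "a * b \<noteq> 0"
  proof
    assume ab: "a * b = 0"
    obtain c where c: "a * c = 1" using nonzero_invertible[OF a] by blast
    have "b = (a * c) * b" using c by simp
    also have "\<dots> = c * (a * b)" by (simp add: ac_simps)
    also have "\<dots> = 0" using ab by simp
    finally show False using b by simp
  qed
qed

end

definition qf_le :: "'a::qf_char1 \<Rightarrow> 'a \<Rightarrow> bool" where
  "qf_le a b \<longleftrightarrow> a + b = b"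

definition totally_ordered_qf :: "'a::qf_char1 itself \<Rightarrow> bool" where
  "totally_ordered_qf _ \<longleftrightarrow> (\<forall>a b :: 'a. qf_le a b \<or> qf_le b a)"

definition is_root :: "'a::comm_semiring_0 poly \<Rightarrow> 'a \<Rightarrow> bool" where
  "is_root P x \<longleftrightarrow> (\<exists>P1 P2. P = P1 + P2 \<and> (\<forall>n. coeff P1 n = 0 \<or> coeff P2 n = 0)
       \<and> poly P1 x = poly P2 x)"

definition ideal_gen :: "'a::comm_semiring_0 set \<Rightarrow> 'a set" where
  "ideal_gen S = {p. \<exists>(n::nat) f g. (\<forall>i<n. g i \<in> S) \<and> p = (\<Sum>i<n. f i * g i)}"

definition ratrel :: "'a::qf_char1 poly \<Rightarrow> 'a poly \<Rightarrow> bool" where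
  "ratrel P Q \<longleftrightarrow> (\<exists>R. R \<noteq> 0 \<and> R * P = R * Q)"

lemma ratrel_transI:
  fixes x y z R S :: "'a::qf_char1 poly"
  assumes R: "R \<noteq> 0" "R * x = R * y" and S: "S \<noteq> 0" "S * y = S * z"
  shows "ratrel x z"
proof -
  have nz: "S * R \<noteq> 0" using R S by simp
  have "(S * R) * x = S * (R * x)" by (simp add: ac_simps)
  also have "\<dots> = S * (R * y)" using R(2) by simp
  also have "\<dots> = R * (S * y)" by (simp add: ac_simps)
  also have "\<dots> = R * (S * z)" using S(2) by simp
  also have "\<dots> = (S * R) * z" by (simp add: ac_simps)
  finally have "(S * R) * x = (S * R) * z" .
  with nz show ?thesis unfolding ratrel_def by blast
qed

lemma ratrel_refl: "ratrel a a"
  unfolding ratrel_def by (rule exI[of _ 1]) simp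

lemma ratrel_sym: "ratrel a b \<Longrightarrow> ratrel b a"
  unfolding ratrel_def by (metis (no_types))

lemma ratrel_trans: "ratrel x y \<Longrightarrow> ratrel y z \<Longrightarrow> ratrel x z"
proof -
  assume "ratrel x y" "ratrel y z"
  then obtain R S where "R \<noteq> 0" "R * x = R * y" "S \<noteq> 0" "S * y = S * z"
    unfolding ratrel_def by blast
  then show "ratrel x z" by (rule ratrel_transI)
qed

lemma ratrel_equivp: "equivp ratrel"
  by (rule equivpI; rule reflpI sympI transpI)
     (erule ratrel_refl ratrel_sym ratrel_trans | rule ratrel_refl | assumption)+

quotient_type (overloaded) 'a ratpoly = "'a::qf_char1 poly" / ratrel
  by (rule ratrel_equivp)

lemma ratrel_add:
  assumes "ratrel a b" "ratrel c d" shows "ratrel (a + c) (b + d)"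
proof -
  from assms obtain R S where R: "R \<noteq> 0" "R * a = R * b" and S: "S \<noteq> 0" "S * c = S * d"
    unfolding ratrel_def by blast
  have nz: "R * S \<noteq> 0" using R S by simp
  have "(R * S) * (a + c) = S * (R * a) + R * (S * c)" by (simp add: algebra_simps)
  also have "\<dots> = S * (R * b) + R * (S * d)" using R(2) S(2) by simp
  also have "\<dots> = (R * S) * (b + d)" by (simp add: algebra_simps)
  finally have "(R * S) * (a + c) = (R * S) * (b + d)" .
  with nz show ?thesis unfolding ratrel_def by blast
qed

lemma ratrel_mult:
  assumes "ratrel a b" "ratrel c d" shows "ratrel (a * c) (b * d)"
proof -
  from assms obtain R S where R: "R \<noteq> 0" "R * a = R * b" and S: "S \<noteq> 0" "S * c = S * d"
    unfolding ratrel_def by blast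
  have nz: "R * S \<noteq> 0" using R S by simp
  have "(R * S) * (a * c) = (R * a) * (S * c)" by (simp add: algebra_simps)
  also have "\<dots> = (R * b) * (S * d)" using R(2) S(2) by simp
  also have "\<dots> = (R * S) * (b * d)" by (simp add: algebra_simps)
  finally have "(R * S) * (a * c) = (R * S) * (b * d)" .
  with nz show ?thesis unfolding ratrel_def by blast
qed

instantiation ratpoly :: (qf_char1) comm_semiring_1
begin

lift_definition zero_ratpoly :: "'a ratpoly" is "0" .
lift_definition one_ratpoly :: "'a ratpoly" is "1" .
lift_definition plus_ratpoly :: "'a ratpoly \<Rightarrow> 'a ratpoly \<Rightarrow> 'a ratpoly" is "(+)"
  by (rule ratrel_add)
lift_definition times_ratpoly :: "'a ratpoly \<Rightarrow> 'a ratpoly \<Rightarrow> 'a ratpoly" is "(*)"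
  by (rule ratrel_mult)

instance
proof
  fix a b c :: "'a ratpoly"
  show "a + b + c = a + (b + c)" by transfer (simp add: add.assoc ratrel_refl)
  show "a + b = b + a" by transfer (simp add: add.commute ratrel_refl)
  show "0 + a = a" by transfer (simp add: ratrel_refl)
  show "a * b * c = a * (b * c)" by transfer (simp add: mult.assoc ratrel_refl)
  show "a * b = b * a" by transfer (simp add: mult.commute ratrel_refl)
  show "1 * a = a" by transfer (simp add: ratrel_refl)
  show "(a + b) * c = a * c + b * c" by transfer (simp add: distrib_right ratrel_refl)
  show "0 * a = 0" by transfer (simp add: ratrel_refl)
  show "a * 0 = 0" by transfer (simp add: ratrel_refl)
  show "(0::'a ratpoly) \<noteq> 1"
  proof transfer
    show "\<not> ratrel (0::'a poly) 1" unfolding ratrel_def by simp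
  qed
qed

end

definition rat_of_poly :: "'a::qf_char1 poly \<Rightarrow> 'a ratpoly" where
  "rat_of_poly = abs_ratpoly"

text \<open>A rational polynomial has x as a root if one (equivalently every) representative does.\<close>
definition rat_is_root :: "'a::qf_char1 ratpoly \<Rightarrow> 'a \<Rightarrow> bool" where
  "rat_is_root F x \<longleftrightarrow> (\<exists>P. rat_of_poly P = F \<and> is_root P x)"

end

theory Submission imports Defs begin

(* The values of the monomials of P at x form a finite set whose sum is its maximum, so
   x is a root of P exactly when P(x) = 0 or the maximum is attained by two distinct
   monomials ("tropical root").  Part (a) then splits into two inclusions:
   - tropical roots are closed under addition and under multiplication by arbitrary
     polynomials, and every generator X^k + x^k has x as a tropical root, so the ideal
     J generated by these binomials consists of polynomials with root x;
   - conversely, if the maximum of P at x is attained at exponents i and j, then P is a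
     sum over n \<noteq> i of binomials c_n X^n + e_n X^i with e_n x^i = c_n x^n, and each such
     binomial is a monomial multiple of X^|n-i| + x^|n-i|.
   For part (b) the key identity (X+x)^k (X^k+x^k) = (X+x)^(2k) shows that X^k + x^k
   becomes (X+x)^k in the fraction semiring K{X}; so J maps onto the ideal generated
   by X + x, and roots in K{X} are by definition images of roots in K[X]. *)

lemma qf_add_idem: "(a::'a::qf_char1) + a = a"
proof -
  have "a + a = a * (1 + 1)" by (simp only: distrib_left mult_1_right)
  then show ?thesis by (simp only: one_add_one_qf mult_1_right)
qed

lemma qf_mult_right_cancel:
  fixes a b c :: "'a::qf_char1"
  assumes "c \<noteq> 0" and "a * c = b * c"
  shows "a = b"
proof -
  obtain d where d: "c * d = 1" using nonzero_invertible[OF assms(1)] by blast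
  have "a = a * c * d" using d by (simp add: mult.assoc)
  also have "\<dots> = b" using assms(2) d by (simp add: mult.assoc)
  finally show ?thesis .
qed

lemma qf_power_nonzero: "(x::'a::qf_char1) \<noteq> 0 \<Longrightarrow> x ^ n \<noteq> 0"
  by (induct n) auto

lemma qf_le_antisym: "qf_le (a::'a::qf_char1) b \<Longrightarrow> qf_le b a \<Longrightarrow> a = b"
  unfolding qf_le_def by (simp add: add.commute)

lemma qf_le_trans: "qf_le (a::'a::qf_char1) b \<Longrightarrow> qf_le b c \<Longrightarrow> qf_le a c"
  unfolding qf_le_def by (metis add.assoc)

lemma qf_le_mult: "qf_le (a::'a::qf_char1) b \<Longrightarrow> qf_le (c * a) (c * b)"
  unfolding qf_le_def by (metis distrib_left)

lemma qf_le_zero: "qf_le (a::'a::qf_char1) 0 \<Longrightarrow> a = 0"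
  by (simp add: qf_le_def)

lemma qf_le_total:
  "totally_ordered_qf TYPE('a::qf_char1) \<Longrightarrow> qf_le (a::'a) b \<or> qf_le b a"
  unfolding totally_ordered_qf_def by blast

lemma qf_le_sum: "finite A \<Longrightarrow> n \<in> A \<Longrightarrow> qf_le (f n :: 'a::qf_char1) (sum f A)"
  unfolding qf_le_def by (simp add: sum.remove add.assoc[symmetric] qf_add_idem)

lemma qf_sum_le:
  "finite A \<Longrightarrow> (\<And>n. n \<in> A \<Longrightarrow> qf_le (f n) (c::'a::qf_char1)) \<Longrightarrow> qf_le (sum f A) c"
proof (induction A rule: finite_induct)
  case empty then show ?case by (simp add: qf_le_def)
next
  case (insert a A) then show ?case unfolding qf_le_def by (simp add: add.assoc)
qed

lemma qf_sum_eq_bound: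
  assumes "finite A" "j \<in> A" "\<And>n. n \<in> A \<Longrightarrow> qf_le (f n) (c::'a::qf_char1)" "f j = c"
  shows "sum f A = c"
  using qf_sum_le[of A f c] qf_le_sum[of A j f] assms by (metis qf_le_antisym)

lemma qf_sum_attained:
  assumes tot: "totally_ordered_qf TYPE('a::qf_char1)"
  shows "finite A \<Longrightarrow> A \<noteq> {} \<Longrightarrow> \<exists>n\<in>A. sum f A = (f n :: 'a)"
proof (induction A rule: finite_induct)
  case empty then show ?case by simp
next
  case (insert a A)
  show ?case
  proof (cases "A = {}")
    case True then show ?thesis by simp
  next
    case False
    then obtain n where n: "n \<in> A" "sum f A = f n" using insert by blast
    have "qf_le (f a) (f n) \<or> qf_le (f n) (f a)" using qf_le_total[OF tot] .
    then show ?thesis using insert n unfolding qf_le_def by (auto simp: add.commute)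
  qed
qed

lemma monomial_value_le: "qf_le (coeff P n * x ^ n) (poly P (x::'a::qf_char1))"
proof (cases "n \<le> degree P")
  case True then show ?thesis unfolding poly_altdef by (intro qf_le_sum) auto
next
  case False then show ?thesis by (simp add: coeff_eq_0 qf_le_def)
qed

section \<open>Tropical roots\<close>

definition tropical_root :: "'a::qf_char1 poly \<Rightarrow> 'a \<Rightarrow> bool" where
  "tropical_root P x \<longleftrightarrow> poly P x = 0 \<or>
     (\<exists>i j. i \<noteq> j \<and> coeff P i * x ^ i = poly P x \<and> coeff P j * x ^ j = poly P x)"

text \<open>Split off one maximal monomial: it balances the rest.\<close>
lemma tropical_root_imp_root:
  assumes m: "tropical_root P (x::'a::qf_char1)"
  shows "is_root P x"
proof (cases "poly P x = 0")
  case True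
  show ?thesis unfolding is_root_def
    by (rule exI[of _ 0], rule exI[of _ P]) (simp add: True)
next
  case False
  then obtain i j where ij: "i \<noteq> j" "coeff P i * x ^ i = poly P x" "coeff P j * x ^ j = poly P x"
    using m unfolding tropical_root_def by blast
  have "coeff P j \<noteq> 0" using ij False by auto
  define A where "A = {..degree P} - {i}"
  have fA: "finite A" by (simp add: A_def)
  have jA: "j \<in> A" using ij \<open>coeff P j \<noteq> 0\<close> le_degree unfolding A_def by auto
  define P1 where "P1 = monom (coeff P i) i"
  define P2 where "P2 = (\<Sum>n\<in>A. monom (coeff P n) n)"
  have c2: "coeff P2 n = (if n \<in> A then coeff P n else 0)" for n
    unfolding P2_def coeff_sum by (simp add: coeff_monom fA)
  have "P = P1 + P2"
    by (rule poly_eqI) (auto simp: c2 P1_def A_def coeff_monom coeff_eq_0)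
  moreover have "\<forall>n. coeff P1 n = 0 \<or> coeff P2 n = 0"
    unfolding P1_def c2 A_def by (auto simp: coeff_monom)
  moreover have "poly P2 x = poly P x"
    unfolding P2_def poly_sum poly_monom
    using monomial_value_le ij(3) by (intro qf_sum_eq_bound[OF fA jA])
  then have "poly P1 x = poly P2 x" unfolding P1_def poly_monom using ij by simp
  ultimately show ?thesis unfolding is_root_def by blast
qed

text \<open>Conversely the maxima of the two parts of a root decomposition give two distinct
  exponents; this needs the total order.\<close>
lemma root_imp_tropical_root:
  assumes tot: "totally_ordered_qf TYPE('a::qf_char1)" and r: "is_root P (x::'a)"
  shows "tropical_root P x"
proof -
  obtain P1 P2 where P: "P = P1 + P2" and dis: "\<forall>n. coeff P1 n = 0 \<or> coeff P2 n = 0"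
    and eq: "poly P1 x = poly P2 x" using r unfolding is_root_def by blast
  have PM: "poly P x = poly P1 x" using P eq by (simp add: qf_add_idem)
  show ?thesis
  proof (cases "poly P x = 0")
    case True then show ?thesis by (simp add: tropical_root_def)
  next
    case False
    obtain i where i: "coeff P1 i * x ^ i = poly P1 x"
      using qf_sum_attained[OF tot, of "{..degree P1}" "\<lambda>n. coeff P1 n * x ^ n"]
      unfolding poly_altdef by auto
    obtain j where j: "coeff P2 j * x ^ j = poly P2 x"
      using qf_sum_attained[OF tot, of "{..degree P2}" "\<lambda>n. coeff P2 n * x ^ n"]
      unfolding poly_altdef by auto
    have c1: "coeff P1 i \<noteq> 0" using i False PM by auto
    have c2: "coeff P2 j \<noteq> 0" using j False PM eq by auto
    have "coeff P i = coeff P1 i" using dis c1 P by (metis add_0_right coeff_add)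
    moreover have "coeff P j = coeff P2 j" using dis c2 P by (metis add_0 coeff_add)
    moreover have "i \<noteq> j" using dis c1 c2 by metis
    ultimately show ?thesis
      unfolding tropical_root_def using i j PM eq by metis
  qed
qed

lemma root_iff_tropical_root:
  "totally_ordered_qf TYPE('a::qf_char1) \<Longrightarrow> is_root P (x::'a) \<longleftrightarrow> tropical_root P x"
  using root_imp_tropical_root tropical_root_imp_root by blast

text \<open>Adding a polynomial with smaller value keeps the maximal monomials of P maximal.\<close>
lemma tropical_root_add_smaller:
  assumes p: "tropical_root P (x::'a::qf_char1)" and le: "qf_le (poly Q x) (poly P x)"
  shows "tropical_root (P + Q) x"
proof -
  have val: "poly (P + Q) x = poly P x" using le by (simp add: qf_le_def add.commute)
  show ?thesis
  proof (cases "poly P x = 0")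
    case True then show ?thesis using val by (simp add: tropical_root_def)
  next
    case False
    then obtain i j where ij: "i \<noteq> j" "coeff P i * x ^ i = poly P x" "coeff P j * x ^ j = poly P x"
      using p unfolding tropical_root_def by blast
    have k: "coeff (P + Q) k * x ^ k = poly P x" if "coeff P k * x ^ k = poly P x" for k
    proof -
      have "qf_le (coeff Q k * x ^ k) (poly P x)" using monomial_value_le le qf_le_trans by blast
      then show ?thesis using that by (simp add: distrib_right qf_le_def add.commute)
    qed
    show ?thesis unfolding tropical_root_def val using ij k by blast
  qed
qed

lemma tropical_root_add:
  assumes tot: "totally_ordered_qf TYPE('a::qf_char1)"
    and p: "tropical_root P (x::'a)" and q: "tropical_root Q x"
  shows "tropical_root (P + Q) x"
proof (cases "qf_le (poly Q x) (poly P x)")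
  case True then show ?thesis using tropical_root_add_smaller[OF p] by blast
next
  case False
  then have "qf_le (poly P x) (poly Q x)" using qf_le_total[OF tot] by blast
  then show ?thesis using tropical_root_add_smaller[OF q] by (simp add: add.commute)
qed

lemma tropical_root_sum:
  assumes tot: "totally_ordered_qf TYPE('a::qf_char1)"
  shows "finite A \<Longrightarrow> (\<And>a. a \<in> A \<Longrightarrow> tropical_root (f a) (x::'a)) \<Longrightarrow> tropical_root (sum f A) x"
proof (induction A rule: finite_induct)
  case empty then show ?case by (simp add: tropical_root_def)
next
  case (insert a A) then show ?case by (simp add: tropical_root_add[OF tot])
qed

text \<open>Multiplying by a monomial shifts all exponents and scales all values uniformly.\<close>
lemma tropical_root_monom_mult:
  assumes p: "tropical_root P (x::'a::qf_char1)"
  shows "tropical_root (monom a k * P) x"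
proof (cases "poly P x = 0")
  case True then show ?thesis by (simp add: tropical_root_def)
next
  case False
  then obtain i j where ij: "i \<noteq> j" "coeff P i * x ^ i = poly P x" "coeff P j * x ^ j = poly P x"
    using p unfolding tropical_root_def by blast
  have shift: "coeff (monom a k * P) (l + k) * x ^ (l + k) = poly (monom a k * P) x"
    if "coeff P l * x ^ l = poly P x" for l
  proof -
    have "coeff (monom a k * P) (l + k) * x ^ (l + k) = a * x ^ k * (coeff P l * x ^ l)"
      unfolding coeff_monom_mult by (simp add: power_add mult_ac)
    then show ?thesis using that by (simp add: poly_monom)
  qed
  have "i + k \<noteq> j + k" using ij by simp
  then show ?thesis unfolding tropical_root_def using shift ij by blast
qed

lemma tropical_root_mult:
  assumes tot: "totally_ordered_qf TYPE('a::qf_char1)" and p: "tropical_root P (x::'a)"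
  shows "tropical_root (R * P) x"
proof -
  have "R * P = (\<Sum>k\<le>degree R. monom (coeff R k) k * P)"
    by (subst poly_as_sum_of_monoms[of R, symmetric]) (simp add: sum_distrib_right)
  also have "tropical_root \<dots> x"
    by (rule tropical_root_sum[OF tot]) (auto intro: tropical_root_monom_mult p)
  finally show ?thesis .
qed

text \<open>The generators: X^k + x^k has the two monomial values x^k and x^k at x.\<close>
lemma tropical_root_binomial:
  assumes "k \<ge> 1"
  shows "tropical_root (monom 1 k + [:x ^ k:]) (x::'a::qf_char1)"
proof -
  have "coeff (monom 1 k + [:x ^ k:]) k * x ^ k = x ^ k"
    using assms by (simp add: coeff_pCons split: nat.split)
  moreover have "coeff (monom 1 k + [:x ^ k:]) 0 * x ^ 0 = x ^ k" using assms by simp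
  moreover have "poly (monom 1 k + [:x ^ k:]) x = x ^ k" by (simp add: poly_monom qf_add_idem)
  ultimately show ?thesis unfolding tropical_root_def using assms by (metis not_one_le_zero)
qed

lemma ideal_gen_zero: "0 \<in> ideal_gen S"
  unfolding ideal_gen_def by (rule CollectI, rule exI[of _ 0]) simp

lemma ideal_gen_step: "p \<in> ideal_gen S \<Longrightarrow> s \<in> S \<Longrightarrow> p + c * s \<in> ideal_gen S"
proof -
  assume "p \<in> ideal_gen S" "s \<in> S"
  then obtain n :: nat and f g where h: "\<forall>i<n. g i \<in> S" "p = (\<Sum>i<n. f i * g i)"
    unfolding ideal_gen_def by blast
  have "\<forall>i<Suc n. (g(n := s)) i \<in> S" using h \<open>s \<in> S\<close> by (auto simp: less_Suc_eq)
  moreover have "p + c * s = (\<Sum>i<Suc n. (f(n := c)) i * (g(n := s)) i)" using h by simp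
  ultimately show ?thesis unfolding ideal_gen_def by blast
qed

lemma ideal_gen_mult: "s \<in> S \<Longrightarrow> c * s \<in> ideal_gen S"
  using ideal_gen_step[OF ideal_gen_zero] by fastforce

lemma ideal_gen_induct[consumes 1, case_names zero step]:
  assumes "p \<in> ideal_gen S" and zero: "Q 0"
    and step: "\<And>p c s. Q p \<Longrightarrow> s \<in> S \<Longrightarrow> Q (p + c * s)"
  shows "Q p"
proof -
  obtain n :: nat and f g where h: "\<forall>i<n. g i \<in> S" "p = (\<Sum>i<n. f i * g i)"
    using assms(1) unfolding ideal_gen_def by blast
  have "Q (\<Sum>i<m. f i * g i)" if "m \<le> n" for m
    using that by (induction m) (simp_all add: zero step h(1))
  then show ?thesis using h(2) by simp
qed

lemma ideal_gen_add:
  assumes "p \<in> ideal_gen S" and "q \<in> ideal_gen S"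
  shows "p + q \<in> ideal_gen S"
  using assms(2)
  by (induction q rule: ideal_gen_induct) (simp_all add: assms(1) ideal_gen_step add.assoc[symmetric])

lemma ideal_gen_sum:
  "finite A \<Longrightarrow> (\<And>a. a \<in> A \<Longrightarrow> h a \<in> ideal_gen S) \<Longrightarrow> sum h A \<in> ideal_gen S"
  by (induction A rule: finite_induct) (auto simp: ideal_gen_zero intro: ideal_gen_add)

section \<open>Part (a): roots in K[X]\<close>

abbreviation root_gens :: "'a::qf_char1 \<Rightarrow> 'a poly set" where
  "root_gens x \<equiv> {monom 1 k + [:x ^ k:] | k. k \<ge> 1}"

lemma ideal_imp_tropical_root:
  assumes tot: "totally_ordered_qf TYPE('a::qf_char1)" and "P \<in> ideal_gen (root_gens (x::'a))"
  shows "tropical_root P x"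
  using assms(2)
proof (induction P rule: ideal_gen_induct)
  case zero then show ?case by (simp add: tropical_root_def)
next
  case (step P c s)
  then show ?case
    by (auto intro!: tropical_root_add[OF tot] tropical_root_mult[OF tot] tropical_root_binomial)
qed

lemma balanced_binomial_in_ideal_lt:
  fixes x :: "'a::qf_char1"
  assumes "x \<noteq> 0" "i < n" "a * x ^ n = b * x ^ i"
  shows "monom a n + monom b i \<in> ideal_gen (root_gens x)"
proof -
  have "b * x ^ i = (a * x ^ (n - i)) * x ^ i"
    using assms(2,3) by (simp add: mult.assoc power_add[symmetric])
  then have b: "b = a * x ^ (n - i)"
    using qf_mult_right_cancel qf_power_nonzero[OF assms(1)] by metis
  have "monom a n + monom b i = monom a i * (monom 1 (n - i) + [:x ^ (n - i):])"
    using assms(2) by (simp add: b distrib_left mult_monom monom_0[symmetric])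
  moreover have "monom 1 (n - i) + [:x ^ (n - i):] \<in> root_gens x" using assms(2) by auto
  ultimately show ?thesis by (simp add: ideal_gen_mult)
qed

lemma balanced_binomial_in_ideal:
  fixes x :: "'a::qf_char1"
  assumes "x \<noteq> 0" "i \<noteq> n" "a * x ^ n = b * x ^ i"
  shows "monom a n + monom b i \<in> ideal_gen (root_gens x)"
proof (cases "i < n")
  case True then show ?thesis using balanced_binomial_in_ideal_lt assms by blast
next
  case False
  then show ?thesis using balanced_binomial_in_ideal_lt[of x n i b a] assms
    by (simp add: add.commute)
qed

text \<open>Polynomials vanishing at x: they are 0 if x \<noteq> 0, and multiples of X if x = 0.\<close>
lemma vanishing_in_ideal:
  fixes x :: "'a::qf_char1"
  assumes "poly P x = 0"
  shows "P \<in> ideal_gen (root_gens x)"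
proof (cases "x = 0")
  case True
  obtain a Q where PQ: "P = pCons a Q" by (cases P)
  have "a = 0" using assms True PQ by (simp add: poly_0_coeff_0)
  have "monom 1 1 + [:x ^ 1:] \<in> root_gens x" by blast
  moreover have "P = Q * (monom 1 1 + [:x ^ 1:])"
    using PQ \<open>a = 0\<close> True by (simp add: monom_Suc monom_0 mult.commute)
  ultimately show ?thesis by (simp add: ideal_gen_mult)
next
  case False
  have "coeff P n = 0" for n
    using monomial_value_le[of P n x] assms qf_le_zero qf_power_nonzero[OF False] by fastforce
  then have "P = 0" by (simp add: poly_eq_iff)
  then show ?thesis by (simp add: ideal_gen_zero)
qed

text \<open>The converse inclusion, valid without totality: if the maximum P(x) is attained at
  exponents i \<noteq> j, rescale every other monomial c_n X^n to the exponent i, obtaining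
  e_n X^i with e_n x^i = c_n x^n.  Then e_n \<le> c_i with equality for n = j, so the e_n
  sum to c_i and P is the sum of the balanced binomials c_n X^n + e_n X^i, n \<noteq> i.\<close>
lemma tropical_root_in_ideal:
  fixes x :: "'a::qf_char1"
  assumes m: "tropical_root P x"
  shows "P \<in> ideal_gen (root_gens x)"
proof (cases "poly P x = 0")
  case True then show ?thesis by (rule vanishing_in_ideal)
next
  case False
  then obtain i j where ij: "i \<noteq> j" "coeff P i * x ^ i = poly P x" "coeff P j * x ^ j = poly P x"
    using m unfolding tropical_root_def by blast
  have x0: "x \<noteq> 0"
  proof
    assume "x = 0"
    then have "i = 0" "j = 0" using ij False by (auto simp: power_0_left split: if_splits)
    then show False using ij by simp
  qed
  obtain z where z: "x ^ i * z = 1" using nonzero_invertible qf_power_nonzero[OF x0] by blast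
  define e where "e n = coeff P n * x ^ n * z" for n
  have e_balanced: "coeff P n * x ^ n = e n * x ^ i" for n
  proof -
    have "e n * x ^ i = coeff P n * x ^ n * (x ^ i * z)" by (simp add: e_def mult_ac)
    then show ?thesis using z by simp
  qed
  have "z * poly P x = coeff P i * (x ^ i * z)" using ij(2) by (simp add: mult_ac)
  then have scaled_value: "z * poly P x = coeff P i" using z by simp
  then have e_le: "qf_le (e n) (coeff P i)" for n
    using qf_le_mult[OF monomial_value_le[of P n x], of z] by (simp add: e_def mult_ac)
  have "coeff P i \<noteq> 0" "coeff P j \<noteq> 0" using ij False by auto
  define A where "A = {..degree P} - {i}"
  have fA: "finite A" and jA: "j \<in> A"
    using ij \<open>coeff P j \<noteq> 0\<close> le_degree unfolding A_def by auto
  have "i \<in> {..degree P}" using \<open>coeff P i \<noteq> 0\<close> by (simp add: le_degree)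
  have "e j = coeff P i" using ij(3) scaled_value by (simp add: e_def mult.commute)
  with fA jA e_le have e_sum: "(\<Sum>n\<in>A. e n) = coeff P i" by (rule qf_sum_eq_bound)
  have "P = (\<Sum>n\<in>A. monom (coeff P n) n) + monom (coeff P i) i"
    using sum.remove[OF _ \<open>i \<in> {..degree P}\<close>, of "\<lambda>n. monom (coeff P n) n"]
      poly_as_sum_of_monoms[of P]
    by (simp add: A_def add.commute)
  also have "\<dots> = (\<Sum>n\<in>A. monom (coeff P n) n + monom (e n) i)"
    by (simp add: sum.distrib monom_sum[symmetric] e_sum)
  also have "\<dots> \<in> ideal_gen (root_gens x)"
    using fA x0 e_balanced
    by (intro ideal_gen_sum balanced_binomial_in_ideal) (auto simp: A_def)
  finally show ?thesis .
qed

lemma root_iff_in_ideal: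
  assumes tot: "totally_ordered_qf TYPE('a::qf_char1)"
  shows "is_root P (x::'a) \<longleftrightarrow> P \<in> ideal_gen (root_gens x)"
  using root_iff_tropical_root[OF tot] ideal_imp_tropical_root[OF tot] tropical_root_in_ideal
  by blast

section \<open>Part (b): roots in K{X}\<close>

lemma rat_of_poly_add: "rat_of_poly (a + b) = rat_of_poly a + rat_of_poly b"
  unfolding rat_of_poly_def by (simp add: plus_ratpoly.abs_eq ratrel_refl)

lemma rat_of_poly_mult: "rat_of_poly (a * b) = rat_of_poly a * rat_of_poly b"
  unfolding rat_of_poly_def by (simp add: times_ratpoly.abs_eq ratrel_refl)

lemma rat_of_poly_zero: "rat_of_poly 0 = 0"
  unfolding rat_of_poly_def by (simp add: zero_ratpoly_def)

lemma rat_of_poly_one: "rat_of_poly 1 = 1"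
  unfolding rat_of_poly_def by (simp add: one_ratpoly_def)

lemma rat_of_poly_power: "rat_of_poly (a ^ k) = rat_of_poly a ^ k"
  by (induct k) (simp_all add: rat_of_poly_one rat_of_poly_mult)

lemma rat_of_poly_surj: "\<exists>P. rat_of_poly P = F"
  unfolding rat_of_poly_def by (metis Quotient_ratpoly Quotient_abs_rep)

lemma rat_of_poly_eqI: "R \<noteq> 0 \<Longrightarrow> R * P = R * Q \<Longrightarrow> rat_of_poly P = rat_of_poly Q"
  unfolding rat_of_poly_def by (metis ratpoly.abs_eq_iff ratrel_def)

text \<open>In characteristic 1 all binomial coefficients collapse: (X+x)^k = \<Sum>_{m\<le>k} x^(k-m) X^m.\<close>
lemma coeff_linear_power:
  "coeff ([:x, 1:] ^ k) m = (if m \<le> k then (x::'a::qf_char1) ^ (k - m) else 0)"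
proof (induction k arbitrary: m)
  case 0 then show ?case by (cases m) auto
next
  case (Suc k)
  note IH = Suc.IH
  have "coeff ([:x, 1:] ^ Suc k) m
      = x * coeff ([:x, 1:] ^ k) m + (case m of 0 \<Rightarrow> 0 | Suc m' \<Rightarrow> coeff ([:x, 1:] ^ k) m')"
    by (simp add: coeff_pCons)
  also have "\<dots> = (if m \<le> Suc k then x ^ (Suc k - m) else 0)"
  proof (cases m)
    case 0 then show ?thesis using Suc.IH by simp
  next
    case (Suc m')
    show ?thesis
    proof (cases "m' < k")
      case True
      then have "x * x ^ (k - Suc m') = x ^ (k - m')" by (simp add: Suc_diff_Suc power_Suc[symmetric])
      then show ?thesis using Suc True IH by (simp add: qf_add_idem)
    next
      case False
      then show ?thesis using Suc IH by (auto simp: le_Suc_eq)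
    qed
  qed
  finally show ?case .
qed

lemma linear_power_times_binomial:
  "[:x, 1:] ^ k * (monom 1 k + [:(x::'a::qf_char1) ^ k:]) = [:x, 1:] ^ k * [:x, 1:] ^ k"
proof (rule poly_eqI)
  fix m
  have "[:x, 1:] ^ k * (monom 1 k + [:x ^ k:]) = monom 1 k * [:x, 1:] ^ k + smult (x ^ k) ([:x, 1:] ^ k)"
    by (simp add: distrib_left mult.commute)
  then have "coeff ([:x, 1:] ^ k * (monom 1 k + [:x ^ k:])) m
     = (if m < k then 0 else coeff ([:x, 1:] ^ k) (m - k)) + x ^ k * coeff ([:x, 1:] ^ k) m"
    by (simp add: coeff_monom_mult)
  also have "\<dots> = (if m \<le> k + k then x ^ (k + k - m) else 0)"
    unfolding coeff_linear_power by (auto simp: power_add[symmetric] qf_add_idem)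
  also have "\<dots> = coeff ([:x, 1:] ^ k * [:x, 1:] ^ k) m"
    by (simp add: power_add[symmetric] coeff_linear_power)
  finally show "coeff ([:x, 1:] ^ k * (monom 1 k + [:x ^ k:])) m = coeff ([:x, 1:] ^ k * [:x, 1:] ^ k) m" .
qed

text \<open>Cancelling the nonzero factor (X+x)^k in K{X}: X^k + x^k becomes (X+x)^k.\<close>
lemma rat_of_poly_binomial:
  "rat_of_poly (monom 1 k + [:(x::'a::qf_char1) ^ k:]) = rat_of_poly [:x, 1:] ^ k"
proof -
  have "coeff ([:x, 1:] ^ k) k = 1" by (simp add: coeff_linear_power)
  then have "[:x, 1:] ^ k \<noteq> 0" by auto
  from rat_of_poly_eqI[OF this linear_power_times_binomial] show ?thesis
    by (simp add: rat_of_poly_power)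
qed

text \<open>J maps into the ideal generated by X + x, since each generator maps to a power of it.\<close>
lemma rat_of_poly_ideal:
  assumes "P \<in> ideal_gen (root_gens (x::'a::qf_char1))"
  shows "rat_of_poly P \<in> ideal_gen {rat_of_poly [:x, 1:]}"
  using assms
proof (induction P rule: ideal_gen_induct)
  case zero then show ?case by (simp add: rat_of_poly_zero ideal_gen_zero)
next
  case (step P c s)
  then obtain k where "k \<ge> 1" "s = monom 1 k + [:x ^ k:]" by blast
  then have "rat_of_poly s = rat_of_poly [:x, 1:] ^ (k - 1) * rat_of_poly [:x, 1:]"
    by (simp add: rat_of_poly_binomial power_Suc2[symmetric])
  then have "rat_of_poly (P + c * s)
      = rat_of_poly P + (rat_of_poly c * rat_of_poly [:x, 1:] ^ (k - 1)) * rat_of_poly [:x, 1:]"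
    by (simp add: rat_of_poly_add rat_of_poly_mult mult.assoc)
  then show ?case using step.IH by (simp add: ideal_gen_step)
qed

text \<open>Conversely every element of the ideal generated by X + x is the image of an element of
  J, because X + x is itself the generator for k = 1.\<close>
lemma ideal_rat_of_poly:
  assumes "F \<in> ideal_gen {rat_of_poly [:x, 1:]}"
  shows "\<exists>P \<in> ideal_gen (root_gens (x::'a::qf_char1)). rat_of_poly P = F"
  using assms
proof (induction F rule: ideal_gen_induct)
  case zero then show ?case using ideal_gen_zero rat_of_poly_zero by blast
next
  case (step F c s)
  obtain P where P: "P \<in> ideal_gen (root_gens x)" "rat_of_poly P = F" using step.IH by blast
  obtain Q where Q: "rat_of_poly Q = c" using rat_of_poly_surj by blast
  have s: "s = rat_of_poly [:x, 1:]" using step.hyps by simp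
  have "[:x, 1:] \<in> root_gens x"
    by (rule CollectI, rule exI[of _ 1]) (simp add: monom_Suc monom_0)
  then have "P + Q * [:x, 1:] \<in> ideal_gen (root_gens x)" by (rule ideal_gen_step[OF P(1)])
  moreover have "rat_of_poly (P + Q * [:x, 1:]) = F + c * s"
    by (simp only: rat_of_poly_add rat_of_poly_mult P(2) Q s)
  ultimately show ?case by blast
qed

theorem theorem3p1:
  fixes x :: "'a::qf_char1"
  assumes "totally_ordered_qf TYPE('a)"
  shows "{P :: 'a poly. is_root P x} = ideal_gen {monom 1 k + [:x ^ k:] | k. k \<ge> 1}
       \<and> {F :: 'a ratpoly. rat_is_root F x} = ideal_gen {rat_of_poly [:x, 1:]}"
proof
  show part_a: "{P. is_root P x} = ideal_gen (root_gens x)"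
    using root_iff_in_ideal[OF assms] by blast
  show "{F. rat_is_root F x} = ideal_gen {rat_of_poly [:x, 1:]}"
  proof (intro set_eqI iffI)
    fix F assume "F \<in> {F. rat_is_root F x}"
    then show "F \<in> ideal_gen {rat_of_poly [:x, 1:]}"
      unfolding rat_is_root_def using part_a rat_of_poly_ideal by blast
  next
    fix F assume "F \<in> ideal_gen {rat_of_poly [:x, 1:]}"
    then show "F \<in> {F. rat_is_root F x}"
      unfolding rat_is_root_def using part_a ideal_rat_of_poly by blast
  qed
qed

end
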